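(* Let $K$ be an algebraically closed field of characteristic zero, $\mathcal{K} = K(t)$, $\alpha \in \mathcal{K}$, and let $N \ge 1$, $d \ge 2$ be integers. Then $\alpha$ realizes portrait $(0,N)$ for $f_d(z) = z^d+t$ if and only if $(\alpha,N,d) \ne (-1/2,2,2)$.
   Context: For $c \in K$, let $f_{d,c}(z) = z^d+c$. A point $x$ has preperiodic portrait $(M,N)$ for a map $\phi$ if $M \ge 0$ is minimal with $\phi^M(x)$ periodic and $\phi^M(x)$ has exact period $N$. We say $\alpha \in \mathcal{K}$ realizes portrait $(M,N)$ for $f_d$ if there exists $c \in K$ such that the specialization $\alpha(c) \in \mathbb{P}^1(K)$ (reduction of $\alpha$ modulo the place $t=c$) has portrait $(M,N)$ for $f_{d,c}$. *)

theory Defs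
  imports "HOL-Computational_Algebra.Computational_Algebra"
begin

text \<open>Points of the projective line P^1(K): None is the point at infinity.\<close>

definition fdc :: "nat \<Rightarrow> 'a::field \<Rightarrow> 'a option \<Rightarrow> 'a option" where
  "fdc d c x = (case x of None \<Rightarrow> None | Some z \<Rightarrow> Some (z ^ d + c))"

definition specialize :: "'a::field_gcd poly fract \<Rightarrow> 'a \<Rightarrow> 'a option" where
  "specialize \<alpha> c = (case quot_of_fract \<alpha> of (p, q) \<Rightarrow>
     (if poly q c = 0 then None else Some (poly p c / poly q c)))"

definition has_exact_period :: "('b \<Rightarrow> 'b) \<Rightarrow> 'b \<Rightarrow> nat \<Rightarrow> bool" where
  "has_exact_period \<phi> x N \<longleftrightarrow> N \<ge> 1 \<and> (\<phi> ^^ N) x = x \<and> (\<forall>m. 0 < m \<and> m < N \<longrightarrow> (\<phi> ^^ m) x \<noteq> x)"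

definition is_periodic :: "('b \<Rightarrow> 'b) \<Rightarrow> 'b \<Rightarrow> bool" where
  "is_periodic \<phi> x \<longleftrightarrow> (\<exists>n\<ge>1. (\<phi> ^^ n) x = x)"

definition has_portrait :: "('b \<Rightarrow> 'b) \<Rightarrow> 'b \<Rightarrow> nat \<Rightarrow> nat \<Rightarrow> bool" where
  "has_portrait \<phi> x M N \<longleftrightarrow>
     is_periodic \<phi> ((\<phi> ^^ M) x) \<and> (\<forall>m<M. \<not> is_periodic \<phi> ((\<phi> ^^ m) x)) \<and>
     has_exact_period \<phi> ((\<phi> ^^ M) x) N"

definition realizes_portrait :: "'a::field_gcd poly fract \<Rightarrow> nat \<Rightarrow> nat \<Rightarrow> nat \<Rightarrow> bool" where
  "realizes_portrait \<alpha> d M N \<longleftrightarrow> (\<exists>c. has_portrait (fdc d c) (specialize \<alpha> c) M N)"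

end

theory Submission
  imports Defs
begin

definition wronskian :: "'a::idom poly \<Rightarrow> 'a poly \<Rightarrow> 'a poly" where
  "wronskian A B = A * pderiv B - pderiv A * B"

lemma power_order_minus_one_dvd_pderiv:
  fixes p :: "'a::{idom,semiring_char_0} poly"
  shows "[:-c,1:] ^ (order c p - 1) dvd pderiv p"
proof (cases "pderiv p = 0 \<or> poly p c \<noteq> 0")
  case True
  then show ?thesis by (auto simp: order_0I)
next
  case False
  then have "order c p - 1 = order c (pderiv p)"
    using order_pderiv[of p c] by force
  then show ?thesis using order_1 by metis
qed

lemma order_wronskian:
  fixes A B :: "'a::{idom,semiring_char_0} poly"
  assumes "wronskian A B \<noteq> 0"
  shows "order c A + order c B \<le> order c (wronskian A B) + 1"
proof -
  define l where "l = [:-c,1:]"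
  define a b where "a = order c A" and "b = order c B"
  have "l ^ a dvd A" "l ^ b dvd B"
    unfolding l_def a_def b_def by (simp_all add: order_1)
  moreover have "l ^ (a - 1) dvd pderiv A" "l ^ (b - 1) dvd pderiv B"
    unfolding l_def a_def b_def by (rule power_order_minus_one_dvd_pderiv)+
  ultimately have "l ^ (a + (b - 1)) dvd A * pderiv B" "l ^ ((a - 1) + b) dvd pderiv A * B"
    by (simp_all add: power_add mult_dvd_mono)
  then have "l ^ (a + b - 1) dvd A * pderiv B" "l ^ (a + b - 1) dvd pderiv A * B"
    by (auto elim!: dvd_trans[rotated] intro!: le_imp_power_dvd)
  then have "l ^ (a + b - 1) dvd wronskian A B"
    unfolding wronskian_def by (rule dvd_diff)
  then have "a + b - 1 \<le> order c (wronskian A B)"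
    using assms unfolding l_def by (simp add: order_divides)
  then show ?thesis unfolding a_def b_def by arith
qed

lemma wronskian_nonzero_if_degree_less:
  fixes X Y :: "'a::field_char_0 poly"
  assumes "degree Y < degree X" "Y \<noteq> 0"
  shows "wronskian X Y \<noteq> 0"
proof (cases "degree Y = 0")
  case True
  then have "pderiv Y = 0" "pderiv X \<noteq> 0"
    using assms by (simp_all add: pderiv_eq_0_iff)
  then show ?thesis
    using assms by (simp add: wronskian_def)
next
  case False
  define n where "n = degree X + degree Y - 1"
  have "coeff (X * pderiv Y) n = lead_coeff X * (of_nat (degree Y) * lead_coeff Y)"
    using coeff_mult_degree_sum[of X "pderiv Y"] False
    by (simp add: n_def degree_pderiv coeff_pderiv)
  moreover have "coeff (pderiv X * Y) n = (of_nat (degree X) * lead_coeff X) * lead_coeff Y"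
    using coeff_mult_degree_sum[of "pderiv X" Y] assms(1)
    by (simp add: n_def degree_pderiv coeff_pderiv)
  ultimately have "coeff (wronskian X Y) n
      = lead_coeff X * lead_coeff Y * (of_nat (degree Y) - of_nat (degree X))"
    by (simp add: wronskian_def algebra_simps)
  moreover have "X \<noteq> 0" "(of_nat (degree Y) :: 'a) \<noteq> of_nat (degree X)"
    using assms by auto
  ultimately show ?thesis using assms(2) by auto
qed

lemma degree_wronskian_le:
  fixes X Y :: "'a::field_char_0 poly"
  assumes "degree X \<ge> 1"
  shows "degree (wronskian X Y) \<le> degree X + degree Y - 1"
proof -
  have "degree (X * pderiv Y) \<le> degree X + degree Y - 1"
  proof (cases "degree Y = 0")
    case True
    then show ?thesis by (simp add: pderiv_eq_0_iff[THEN iffD2])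
  next
    case False
    then show ?thesis using degree_mult_le[of X "pderiv Y"] by (simp add: degree_pderiv)
  qed
  moreover have "degree (pderiv X * Y) \<le> degree X + degree Y - 1"
    using degree_mult_le[of "pderiv X" Y] assms by (simp add: degree_pderiv)
  ultimately show ?thesis
    unfolding wronskian_def by (rule degree_diff_le)
qed

lemma degree_eq_sum_order:
  fixes p :: "'a::alg_closed_field poly"
  assumes "p \<noteq> 0"
  shows "degree p = (\<Sum>x | poly p x = 0. order x p)"
proof -
  obtain A where A: "size A = degree p" "p = smult (lead_coeff p) (\<Prod>x\<in>#A. [:-x, 1:])"
    using alg_closed_imp_factorization[OF assms] by blast
  have "proots (\<Prod>x\<in>#B. [:-x, 1:]) = B" for B :: "'a multiset"
  proof (induction B)
    case (add x B)
    have "(\<Prod>x\<in>#B. [:-x, 1:]) \<noteq> 0" by auto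
    then show ?case using add.IH by (simp add: proots_mult del: mult_pCons_left)
  qed simp
  then have "proots p = A"
    using assms by (subst A(2)) simp
  then have "degree p = size (proots p)" using A(1) by simp
  also have "\<dots> = (\<Sum>x | poly p x = 0. order x p)"
    using assms by (simp add: size_multiset_overloaded_eq)
  finally show ?thesis .
qed

lemma degree_eq_sum_order_superset:
  fixes p :: "'a::alg_closed_field poly"
  assumes "p \<noteq> 0" "finite S" "{x. poly p x = 0} \<subseteq> S"
  shows "degree p = (\<Sum>x\<in>S. order x p)"
  unfolding degree_eq_sum_order[OF assms(1)]
  by (rule sum.mono_neutral_left) (use assms in \<open>auto simp: order_0I\<close>)

lemma wronskian_add_right: "wronskian X (X + Y) = wronskian X Y"
  by (simp add: wronskian_def pderiv_add algebra_simps)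

lemma order_add_le_wronskian:
  fixes X Y Q :: "'a::{idom,semiring_char_0} poly"
  assumes W: "wronskian X Y \<noteq> 0" and "Q dvd Y" and "Y \<noteq> 0"
    and no_common_root: "\<And>c. poly Q c = 0 \<Longrightarrow> poly X c \<noteq> 0"
  shows "order c X + order c (X + Y) + order c Q
    \<le> of_bool (poly X c = 0) + of_bool (poly (X + Y) c = 0) + of_bool (poly Q c = 0)
       + order c (wronskian X Y)"
proof (cases "poly Q c = 0")
  case True
  then have "poly X c \<noteq> 0" "poly Y c = 0"
    using no_common_root \<open>Q dvd Y\<close> by auto
  then have "order c X = 0" "order c (X + Y) = 0"
    by (simp_all add: order_0I)
  moreover have "order c Q \<le> order c Y"
    using \<open>Q dvd Y\<close> \<open>Y \<noteq> 0\<close> by (auto simp: order_mult)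
  moreover have "order c X + order c Y \<le> order c (wronskian X Y) + 1"
    by (rule order_wronskian[OF W])
  ultimately show ?thesis using True by simp
next
  case False
  have "order c X + order c (X + Y) \<le> order c (wronskian X Y) + 1"
    using order_wronskian[of X "X + Y" c] W by (simp add: wronskian_add_right)
  moreover have "order c X = 0" if "poly X c \<noteq> 0"
    using that by (rule order_0I)
  moreover have "order c (X + Y) = 0" if "poly (X + Y) c \<noteq> 0"
    using that by (rule order_0I)
  ultimately show ?thesis using False by (auto simp: order_0I)
qed

text \<open>A form of the Mason--Stothers theorem for the sum \<open>X + Y\<close>, in which the roots of a
  factor \<open>Q\<close> of \<open>Y\<close> are counted with multiplicity on the left and without on the right.\<close>

lemma mason_stothers_dvd:
  fixes X Y Q :: "'a::{alg_closed_field, field_char_0} poly"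
  assumes "degree Y < degree X" "Y \<noteq> 0" "Q dvd Y"
    and no_common_root: "\<And>c. poly Q c = 0 \<Longrightarrow> poly X c \<noteq> 0"
  shows "degree (X + Y) + degree Q
     < card {c. poly X c = 0} + card {c. poly (X + Y) c = 0} + card {c. poly Q c = 0} + degree Y"
proof -
  define W where "W = wronskian X Y"
  have W0: "W \<noteq> 0"
    unfolding W_def using assms(1,2) by (rule wronskian_nonzero_if_degree_less)
  have X0: "X \<noteq> 0" and Q0: "Q \<noteq> 0" and Z0: "X + Y \<noteq> 0"
    using assms(1-3) by (auto simp: add_eq_0_iff)
  define S where "S = {c. poly X c = 0} \<union> {c. poly (X + Y) c = 0} \<union> {c. poly Q c = 0}"
  have S: "finite S"
    unfolding S_def using poly_roots_finite[OF X0] poly_roots_finite[OF Z0] poly_roots_finite[OF Q0]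
    by blast
  have "degree P = (\<Sum>c\<in>S. order c P)" if "P \<in> {X, X + Y, Q}" for P
    using that X0 Z0 Q0 by (intro degree_eq_sum_order_superset S) (auto simp: S_def)
  then have "degree X + degree (X + Y) + degree Q
      = (\<Sum>c\<in>S. order c X + order c (X + Y) + order c Q)"
    by (simp add: sum.distrib)
  also have "\<dots> \<le> (\<Sum>c\<in>S. of_bool (poly X c = 0) + of_bool (poly (X + Y) c = 0)
      + of_bool (poly Q c = 0) + order c W)"
    using W0 assms(2,3) no_common_root unfolding W_def
    by (intro sum_mono order_add_le_wronskian) auto
  also have "\<dots> = card {c. poly X c = 0} + card {c. poly (X + Y) c = 0} + card {c. poly Q c = 0}
      + (\<Sum>c\<in>S. order c W)"
  proof -
    have "S \<inter> {c. poly P c = 0} = {c. poly P c = 0}" if "P \<in> {X, X + Y, Q}" for P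
      using that unfolding S_def by blast
    then show ?thesis using S by (simp add: sum.distrib del: poly_add)
  qed
  also have "(\<Sum>c\<in>S. order c W) \<le> degree W"
  proof -
    have "(\<Sum>c\<in>S. order c W) = (\<Sum>c \<in> S \<inter> {c. poly W c = 0}. order c W)"
      by (rule sum.mono_neutral_right) (use S in \<open>auto simp: order_0I\<close>)
    also have "\<dots> \<le> (\<Sum>c | poly W c = 0. order c W)"
      by (rule sum_mono2) (use W0 in \<open>auto simp: poly_roots_finite\<close>)
    finally show ?thesis using sum_order_le_degree[OF W0] by simp
  qed
  also have "degree W \<le> degree X + degree Y - 1"
    unfolding W_def using assms(1) by (intro degree_wronskian_le) simp
  finally show ?thesis using assms(1) by simp
qed

lemma ex_notin_family_if_sum_card_less:
  assumes "finite I" "\<And>i. i \<in> I \<Longrightarrow> finite (A i)" "(\<Sum>i\<in>I. card (A i)) < card B"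
  shows "\<exists>x\<in>B. \<forall>i\<in>I. x \<notin> A i"
proof (rule ccontr)
  assume "\<not> ?thesis"
  then have "B \<subseteq> (\<Union>i\<in>I. A i)" by blast
  then have "card B \<le> card (\<Union>i\<in>I. A i)"
    using assms(1,2) by (intro card_mono) auto
  also have "\<dots> \<le> (\<Sum>i\<in>I. card (A i))"
    using assms(1) by (rule card_UN_le)
  finally show False using assms(3) by simp
qed

lemma two_le_power_Suc:
  fixes d :: nat
  shows "d \<ge> 2 \<Longrightarrow> 2 \<le> d ^ Suc k"
  using self_le_power[of d "Suc k"] by linarith

lemma sum_power_less_power:
  fixes d :: nat
  assumes "d \<ge> 2"
  shows "(\<Sum>i<k. d ^ i) < d ^ k"
proof (induction k)
  case (Suc k)
  have "(\<Sum>i<Suc k. d ^ i) < d ^ k + d ^ k" using Suc by simp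
  also have "\<dots> \<le> d ^ Suc k" using mult_le_mono1[OF assms, of "d ^ k"] by (simp only: mult_2 power_Suc)
  finally show ?case .
qed simp

lemma sum_power_half_less:
  fixes d K :: nat
  assumes "d \<ge> 2" "\<not> (K = 0 \<and> d = 2)"
  shows "(\<Sum>i<(K + 2) div 2. d ^ i) < d ^ K * (d - 1)"
proof (cases "K \<le> 1")
  case True
  then show ?thesis
    using assms mult_le_mono[of 2 d 1 "d - 1"] by (cases K) (auto simp: Suc_le_eq)
next
  case False
  then have "(K + 2) div 2 \<le> K" by auto
  then have "(\<Sum>i<(K + 2) div 2. d ^ i) < d ^ K"
    using sum_power_less_power[OF assms(1)] power_increasing[of _ K d] assms(1)
    by (meson less_le_trans one_le_numeral order_trans)
  also have "\<dots> \<le> d ^ K * (d - 1)" using assms by simp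
  finally show ?thesis .
qed

text \<open>The counting argument behind the existence of points of exact period \<open>K + 2\<close>: the
  points of period dividing \<open>K + 2\<close> outnumber those of the possible proper periods
  \<open>1, \<dots>, (K + 2) div 2\<close>.\<close>

lemma ex_root_avoiding_half_indices:
  fixes F :: "nat \<Rightarrow> 'a::idom poly"
  assumes "d \<ge> 2" "\<not> (K = 0 \<and> d = 2)" "\<And>i. F (Suc i) \<noteq> 0"
    and small: "\<And>i. card {c. poly (F (Suc i)) c = 0} \<le> d ^ i * E"
    and large: "d ^ Suc K * E < card {c. poly (F (K + 2)) c = 0} + d ^ K * E + E"
  shows "\<exists>c. poly (F (K + 2)) c = 0 \<and> (\<forall>i < (K + 2) div 2. poly (F (Suc i)) c \<noteq> 0)"
proof -
  define k where "k = (K + 2) div 2"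
  have "(\<Sum>i<k. card {c. poly (F (Suc i)) c = 0}) \<le> (\<Sum>i<k. d ^ i) * E"
    by (simp add: sum_distrib_right sum_mono small)
  moreover have "(\<Sum>i<k. d ^ i) * E + E \<le> d ^ K * (d - 1) * E"
    using sum_power_half_less[OF assms(1,2)] mult_le_mono1[of _ _ E]
    unfolding k_def by (metis Suc_leI add.commute mult_Suc)
  moreover have "d ^ K * (d - 1) * E + d ^ K * E = d ^ Suc K * E"
    using assms(1) by (cases d) (simp_all add: algebra_simps)
  ultimately have "(\<Sum>i<k. card {c. poly (F (Suc i)) c = 0}) < card {c. poly (F (K + 2)) c = 0}"
    using large by linarith
  then obtain c where "poly (F (K + 2)) c = 0" "\<forall>i<k. poly (F (Suc i)) c \<noteq> 0"
    using ex_notin_family_if_sum_card_less[of "{..<k}" "\<lambda>i. {c. poly (F (Suc i)) c = 0}"]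
      poly_roots_finite[OF assms(3)] by fastforce
  then show ?thesis unfolding k_def by blast
qed

text \<open>For \<open>\<alpha> = p / q\<close>, the \<open>n\<close>-th iterate of \<open>z \<mapsto> z ^ d + t\<close> at \<open>\<alpha>\<close> is
  \<open>orbit_num d p q n / q ^ d ^ n\<close>, so the points \<open>c\<close> at which \<open>\<alpha>(c)\<close> has period dividing
  \<open>n\<close> are the roots of \<open>period_poly d p q n\<close>.\<close>

fun orbit_num :: "nat \<Rightarrow> 'a::comm_ring_1 poly \<Rightarrow> 'a poly \<Rightarrow> nat \<Rightarrow> 'a poly" where
  "orbit_num d p q 0 = p"
| "orbit_num d p q (Suc n) = orbit_num d p q n ^ d + [:0, 1:] * q ^ d ^ Suc n"

definition period_poly :: "nat \<Rightarrow> 'a::comm_ring_1 poly \<Rightarrow> 'a poly \<Rightarrow> nat \<Rightarrow> 'a poly" where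
  "period_poly d p q n = orbit_num d p q n - p * q ^ (d ^ n - 1)"

definition orbit_degree :: "nat \<Rightarrow> 'a::zero poly \<Rightarrow> 'a poly \<Rightarrow> nat" where
  "orbit_degree d p q = max (d * degree p) (d * degree q + 1)"

lemma funpow_fdc_Some:
  fixes p q :: "'a::field poly"
  assumes "poly q c \<noteq> 0"
  shows "(fdc d c ^^ n) (Some (poly p c / poly q c))
    = Some (poly (orbit_num d p q n) c / poly q c ^ d ^ n)"
proof (induction n)
  case (Suc n)
  have "(poly q c ^ d ^ n) ^ d = poly q c ^ d ^ Suc n"
    by (simp add: power_mult[symmetric] mult.commute)
  then show ?case
    using Suc assms by (simp add: fdc_def power_divide divide_add_eq_iff)
qed simp

lemma funpow_fdc_fixed_iff:
  fixes p q :: "'a::field poly"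
  assumes "poly q c \<noteq> 0" "d \<ge> 1"
  shows "(fdc d c ^^ n) (Some (poly p c / poly q c)) = Some (poly p c / poly q c)
    \<longleftrightarrow> poly (period_poly d p q n) c = 0"
proof -
  have "poly q c ^ d ^ n = poly q c * poly q c ^ (d ^ n - 1)"
    using assms(2) by (simp flip: power_Suc)
  then show ?thesis
    using assms by (simp add: funpow_fdc_Some period_poly_def field_simps)
qed

lemma poly_orbit_num_at_root:
  fixes p q :: "'a::comm_ring_1 poly"
  assumes "poly q c = 0" "d \<ge> 1"
  shows "poly (orbit_num d p q n) c = poly p c ^ d ^ n"
  by (induction n) (use assms in \<open>simp_all add: power_mult[symmetric] mult.commute zero_power\<close>)

text \<open>At a pole of \<open>\<alpha>\<close> the specialization is \<open>\<infinity>\<close>, which no root of a period polynomial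
  can produce.\<close>

lemma poly_period_poly_at_root_neq_0:
  fixes p q :: "'a::field poly"
  assumes "coprime p q" "poly q c = 0" "d \<ge> 2" "n \<ge> 1"
  shows "poly (period_poly d p q n) c \<noteq> 0"
proof -
  have "d ^ n \<ge> 2"
    using two_le_power_Suc[OF assms(3), of "n - 1"] assms(4) by simp
  then have "poly (period_poly d p q n) c = poly p c ^ d ^ n"
    using assms by (simp add: period_poly_def poly_orbit_num_at_root)
  then show ?thesis using coprime_poly_0[OF assms(1), of c] assms(2) \<open>d ^ n \<ge> 2\<close> by simp
qed

lemma period_poly_Suc:
  fixes p q :: "'a::comm_ring_1 poly"
  assumes "d \<ge> 1"
  shows "period_poly d p q (Suc m) = orbit_num d p q m ^ d + q ^ (d ^ Suc m - 1) * ([:0, 1:] * q - p)"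
proof -
  have "q ^ d ^ Suc m = q ^ (d ^ Suc m - 1) * q"
    using assms by (simp flip: power_Suc2 del: power_Suc)
  then show ?thesis by (simp add: period_poly_def algebra_simps)
qed

lemma degree_pX_mult_power:
  fixes q :: "'a::idom poly"
  assumes "q \<noteq> 0"
  shows "degree ([:0, 1:] * q ^ m) = m * degree q + 1"
  using assms by (simp add: degree_mult_eq degree_power_eq)

lemma degree_orbit_num:
  fixes p q :: "'a::idom poly"
  assumes "d \<ge> 2" "q \<noteq> 0"
  shows "degree (orbit_num d p q (Suc k)) = d ^ k * orbit_degree d p q"
proof (induction k)
  case 0
  have "d * degree p \<noteq> d * degree q + 1"
  proof
    assume "d * degree p = d * degree q + 1"
    then have "d dvd 1" by (metis dvd_add_right_iff dvd_triv_left)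
    then show False using assms(1) by simp
  qed
  moreover have "degree (p ^ d) = d * degree p \<or> (p = 0 \<and> degree p = 0)"
    by (cases "p = 0") (simp_all add: degree_power_eq)
  ultimately show ?case
    using degree_pX_mult_power[OF assms(2), of d] assms(1)
    by (auto simp: orbit_degree_def degree_add_eq_left degree_add_eq_right max_def zero_power)
next
  case (Suc k)
  define E where "E = orbit_degree d p q"
  have "d ^ Suc k * (d * degree q + 1) \<le> d ^ Suc k * E"
    unfolding E_def orbit_degree_def by (intro mult_le_mono2) simp
  moreover have "d ^ Suc k \<ge> 2"
    using assms(1) by (rule two_le_power_Suc)
  then have "d ^ Suc (Suc k) * degree q + 1 < d ^ Suc k * (d * degree q + 1)"
    by (simp only: power_Suc[of d "Suc k"] algebra_simps)
  ultimately have "d ^ Suc (Suc k) * degree q + 1 < d ^ Suc k * E"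
    by linarith
  moreover have "orbit_num d p q (Suc k) \<noteq> 0"
    using Suc assms(1) by (intro notI) (simp add: E_def orbit_degree_def)
  then have "degree (orbit_num d p q (Suc k) ^ d) = d ^ Suc k * E"
    using Suc by (simp add: degree_power_eq E_def)
  ultimately show ?case
    using degree_pX_mult_power[OF assms(2), of "d ^ Suc (Suc k)"]
    unfolding orbit_num.simps(2)[of d p q "Suc k"]
    by (simp add: degree_add_eq_left E_def del: orbit_num.simps power_Suc)
qed

lemma degree_q_power_mult_less_orbit_degree:
  fixes p q T :: "'a::idom poly"
  assumes d: "d \<ge> 2" and "q \<noteq> 0"
    and T: "degree T \<le> degree p \<or> (degree p \<le> degree q \<and> degree T < degree q + d ^ j)"
  shows "degree (q ^ (d ^ Suc j - 1) * T) < d ^ j * orbit_degree d p q"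
proof -
  define D a b t where "D = d ^ Suc j" and "a = degree p" and "b = degree q" and "t = degree T"
  have D: "D = d ^ j * d" "D \<ge> 2"
    unfolding D_def using two_le_power_Suc[OF d, of j] by (simp_all add: mult.commute)
  have "degree (q ^ (D - 1) * T) \<le> (D - 1) * b + t"
    unfolding b_def t_def using degree_mult_le[of "q ^ (D - 1)" T] degree_power_le[of q "D - 1"]
    by (simp add: mult.commute)
  also have "\<dots> < d ^ j * max (d * a) (d * b + 1)"
  proof (cases "a \<le> b")
    case True
    moreover have "d ^ j > 0" using d by simp
    ultimately have "t < b + d ^ j" using T unfolding a_def b_def t_def by linarith
    then have "(D - 1) * b + t < (D - 1) * b + b + d ^ j" by simp
    also have "(D - 1) * b + b = D * b" using D(2) by (cases D) simp_all
    also have "D * b + d ^ j = d ^ j * (d * b + 1)"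
      unfolding D(1) by (simp add: algebra_simps)
    finally show ?thesis by (meson less_le_trans max.cobounded2 mult_le_mono2)
  next
    case False
    then have "(D - 1) * b + t < (D - 1) * a + a"
      using T D(2) unfolding a_def b_def t_def by (intro add_less_le_mono) auto
    also have "\<dots> = D * a" using D(2) by (cases D) simp_all
    also have "\<dots> = d ^ j * (d * a)"
      unfolding D(1) by (simp add: algebra_simps)
    finally show ?thesis by (meson less_le_trans max.cobounded1 mult_le_mono2)
  qed
  finally show ?thesis unfolding D_def a_def b_def orbit_degree_def .
qed

lemma degree_period_poly:
  fixes p q :: "'a::idom poly"
  assumes "d \<ge> 2" "q \<noteq> 0"
  shows "degree (period_poly d p q (Suc k)) = d ^ k * orbit_degree d p q"
proof -
  have "degree (p * q ^ (d ^ Suc k - 1)) < degree (orbit_num d p q (Suc k))"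
    using degree_q_power_mult_less_orbit_degree[OF assms, of p p k] degree_orbit_num[OF assms]
    by (simp add: mult.commute)
  then show ?thesis
    using degree_add_eq_left[of "- (p * q ^ (d ^ Suc k - 1))"] degree_orbit_num[OF assms]
    by (simp add: period_poly_def)
qed

lemma period_poly_neq_0:
  fixes p q :: "'a::idom poly"
  assumes "d \<ge> 2" "q \<noteq> 0"
  shows "period_poly d p q (Suc k) \<noteq> 0"
  using degree_period_poly[OF assms, of p k] assms(1) by (intro notI) (simp add: orbit_degree_def)

lemma card_roots_period_poly_le:
  fixes p q :: "'a::idom poly"
  assumes "d \<ge> 2" "q \<noteq> 0"
  shows "card {c. poly (period_poly d p q (Suc k)) c = 0} \<le> d ^ k * orbit_degree d p q"
  using card_poly_roots_bound[OF period_poly_neq_0[OF assms]] degree_period_poly[OF assms]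
  by simp

lemma degree_pX_mult_minus_le:
  fixes p q :: "'a::idom poly"
  shows "degree ([:0, 1:] * q - p) \<le> max (degree p) (degree q + 1)"
  using degree_diff_le_max[of "[:0, 1:] * q" p] degree_mult_le[of "[:0, 1:]" q] by auto

lemma degree_q_power_mult_pX_minus_less:
  fixes p q :: "'a::idom poly"
  assumes d: "d \<ge> 2" and "q \<noteq> 0"
  shows "degree (q ^ (d ^ Suc (Suc K) - 1) * ([:0, 1:] * q - p)) < d ^ Suc K * orbit_degree d p q"
proof -
  have "degree ([:0, 1:] * q - p) \<le> degree p
      \<or> (degree p \<le> degree q \<and> degree ([:0, 1:] * q - p) < degree q + d ^ Suc K)"
    using degree_pX_mult_minus_le[of q p] two_le_power_Suc[OF d, of K] by auto
  then show ?thesis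
    by (rule degree_q_power_mult_less_orbit_degree[OF assms])
qed

lemma degree_add_degree_pX_mult_minus_le:
  fixes p q :: "'a::idom poly"
  assumes d: "d \<ge> 2"
  shows "degree q + degree ([:0, 1:] * q - p) \<le> orbit_degree d p q"
proof (cases "degree p \<le> degree q")
  case True
  then have "degree q + degree ([:0, 1:] * q - p) \<le> 2 * degree q + 1"
    using degree_pX_mult_minus_le[of q p] by simp
  also have "\<dots> \<le> d * degree q + 1" using d by simp
  finally show ?thesis by (simp add: orbit_degree_def)
next
  case False
  then have "degree q + degree ([:0, 1:] * q - p) \<le> 2 * degree p"
    using degree_pX_mult_minus_le[of q p] by simp
  also have "\<dots> \<le> d * degree p" using d by simp
  finally show ?thesis by (simp add: orbit_degree_def)
qed

lemma card_roots_period_poly_gt: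
  fixes p q :: "'a::{alg_closed_field, field_char_0} poly"
  assumes d: "d \<ge> 2" and "q \<noteq> 0" "coprime p q" "p \<noteq> [:0, 1:] * q"
  defines "E \<equiv> orbit_degree d p q"
  shows "d ^ Suc K * E < card {c. poly (period_poly d p q (K + 2)) c = 0} + d ^ K * E + E"
proof -
  define X Q T where "X = orbit_num d p q (Suc K) ^ d" and "Q = q ^ (d ^ Suc (Suc K) - 1)"
    and "T = [:0, 1:] * q - p"
  have Z: "period_poly d p q (K + 2) = X + Q * T"
    using period_poly_Suc[of d p q "Suc K"] d by (simp add: X_def Q_def T_def)
  have P0: "orbit_num d p q (Suc K) \<noteq> 0"
    using degree_orbit_num[OF d \<open>q \<noteq> 0\<close>, of p K] d by (intro notI) (simp add: orbit_degree_def)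
  have "Q \<noteq> 0" "T \<noteq> 0"
    using assms(2,4) by (simp_all add: Q_def T_def)
  have "degree X = d ^ Suc K * E"
    using degree_orbit_num[OF d \<open>q \<noteq> 0\<close>, of p K] P0 by (simp add: X_def E_def degree_power_eq)
  then have "degree (Q * T) < degree X"
    unfolding Q_def T_def E_def by (rule ssubst) (rule degree_q_power_mult_pX_minus_less[OF d \<open>q \<noteq> 0\<close>])
  moreover have "poly X c \<noteq> 0" if "poly Q c = 0" for c
  proof -
    have "poly q c = 0" using that by (simp add: Q_def)
    then show ?thesis
      using coprime_poly_0[OF assms(3), of c] d
      by (simp add: X_def poly_orbit_num_at_root del: orbit_num.simps)
  qed
  ultimately have "degree (X + Q * T) + degree Q < card {c. poly X c = 0}
      + card {c. poly (X + Q * T) c = 0} + card {c. poly Q c = 0} + degree (Q * T)"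
    using \<open>Q \<noteq> 0\<close> \<open>T \<noteq> 0\<close> by (intro mason_stothers_dvd) auto
  moreover have "card {c. poly X c = 0} \<le> d ^ K * E"
    using card_poly_roots_bound[OF P0] degree_orbit_num[OF d \<open>q \<noteq> 0\<close>, of p K] d
    by (simp add: X_def E_def)
  moreover have "card {c. poly Q c = 0} \<le> degree q"
    using card_poly_roots_bound[OF \<open>q \<noteq> 0\<close>] two_le_power_Suc[OF d, of "Suc K"]
    by (simp add: Q_def)
  moreover have "degree (Q * T) = degree Q + degree T"
    using \<open>Q \<noteq> 0\<close> \<open>T \<noteq> 0\<close> by (rule degree_mult_eq)
  moreover have "degree q + degree T \<le> E"
    unfolding T_def E_def using d by (rule degree_add_degree_pX_mult_minus_le)
  moreover have "degree (X + Q * T) = d ^ Suc K * E"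
    using degree_period_poly[OF d \<open>q \<noteq> 0\<close>, of p "Suc K"] Z by (simp add: E_def)
  ultimately show ?thesis unfolding Z by linarith
qed

lemma card_roots_period_poly_at_t:
  fixes p q :: "'a::{alg_closed_field, field_char_0} poly"
  assumes d: "d \<ge> 2" and "q \<noteq> 0" "coprime p q" and p_def: "p = [:0, 1:] * q"
  shows "card {c. poly (period_poly d p q (Suc k)) c = 0} \<le> d ^ k"
    and "d ^ Suc K < card {c. poly (period_poly d p q (K + 2)) c = 0} + d ^ K + 1"
proof -
  have "is_unit q"
    using assms(3) unfolding p_def by (metis coprime_common_divisor dvd_refl dvd_triv_right)
  then have "degree q = 0"
    by (simp add: is_unit_iff_degree[OF \<open>q \<noteq> 0\<close>])
  then have degP: "degree (orbit_num d p q n) = d ^ n" for n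
    using degree_orbit_num[OF d \<open>q \<noteq> 0\<close>, of p] degree_pX_mult_power[OF \<open>q \<noteq> 0\<close>, of 1] d
    by (cases n) (simp_all add: p_def orbit_degree_def)
  then have P0: "orbit_num d p q n \<noteq> 0" for n
    by (metis degree_0 power_not_zero d not_numeral_le_zero)
  have period: "period_poly d p q (Suc m) = orbit_num d p q m ^ d" for m
    using period_poly_Suc[of d p q m] d by (simp add: p_def)
  have roots: "{c. poly (period_poly d p q (Suc m)) c = 0} = {c. poly (orbit_num d p q m) c = 0}" for m
    using d by (simp add: period)
  show "card {c. poly (period_poly d p q (Suc k)) c = 0} \<le> d ^ k"
    using card_poly_roots_bound[OF P0] degP by (simp add: roots)
  define X Y where "X = orbit_num d p q K ^ d" and "Y = [:0, 1:] * q ^ d ^ Suc K"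
  have degX: "degree X = d ^ Suc K"
    using degP P0 by (simp add: X_def degree_power_eq)
  have degY: "degree Y = 1"
    using degree_pX_mult_power[OF \<open>q \<noteq> 0\<close>, of "d ^ Suc K"] \<open>degree q = 0\<close>
    by (simp add: Y_def del: power_Suc)
  have "degree (X + Y) + degree (1 :: 'a poly) < card {c. poly X c = 0}
      + card {c. poly (X + Y) c = 0} + card {c. poly (1 :: 'a poly) c = 0} + degree Y"
    using degX degY two_le_power_Suc[OF d, of K]
    by (intro mason_stothers_dvd) (auto simp: Y_def)
  moreover have "card {c. poly X c = 0} \<le> d ^ K"
    using card_poly_roots_bound[OF P0] degP d by (simp add: X_def)
  moreover have "X + Y = orbit_num d p q (Suc K)"
    by (simp add: X_def Y_def)
  ultimately show "d ^ Suc K < card {c. poly (period_poly d p q (K + 2)) c = 0} + d ^ K + 1"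
    using degP[of "Suc K"] degY roots[of "Suc K"] by simp
qed

text \<open>For \<open>d = 2\<close> the points of exact period 2 are cut out by the second dynatomic polynomial
  \<open>z\<^sup>2 + z + t + 1\<close>, homogenized at \<open>z = p / q\<close>.\<close>

definition dynatomic2 :: "'a::comm_ring_1 poly \<Rightarrow> 'a poly \<Rightarrow> 'a poly" where
  "dynatomic2 p q = p ^ 2 + p * q + [:1, 1:] * q ^ 2"

lemma period_poly_2_2: "period_poly 2 p q 2 = period_poly 2 p q 1 * dynatomic2 p q"
  by (simp add: period_poly_def dynatomic2_def numeral_2_eq_2 algebra_simps power2_eq_square)

lemma dynatomic2_eq_period_poly_plus:
  "dynatomic2 p q = period_poly 2 p q 1 + q * (2 * p + q)"
  by (simp add: period_poly_def dynatomic2_def numeral_2_eq_2 algebra_simps power2_eq_square)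

lemma four_dynatomic2: "4 * dynatomic2 p q = (2 * p + q) ^ 2 + (4 * [:0, 1:] + 3) * q ^ 2"
  by (simp add: dynatomic2_def algebra_simps power2_eq_square)

lemma degree_dynatomic2:
  fixes p q :: "'a::idom poly"
  assumes "q \<noteq> 0"
  shows "degree (dynatomic2 p q) = orbit_degree 2 p q"
proof -
  have "dynatomic2 p q = orbit_num 2 p q 1 + (p * q + q ^ 2)"
    by (simp add: dynatomic2_def numeral_2_eq_2 algebra_simps)
  moreover have "degree (p * q + q ^ 2) < orbit_degree 2 p q"
    using degree_mult_le[of p q] degree_power_le[of q 2] degree_add_le_max[of "p * q" "q ^ 2"]
    by (auto simp: orbit_degree_def)
  ultimately show ?thesis
    using degree_orbit_num[of 2 q p 0] assms by (simp add: degree_add_eq_left)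
qed

lemma common_root_dynatomic2_period_poly_1:
  fixes p q :: "'a::field_char_0 poly"
  assumes "coprime p q" "poly (dynatomic2 p q) c = 0" "poly (period_poly 2 p q 1) c = 0"
  shows "poly q c \<noteq> 0" "poly (2 * p + q) c = 0" "c = - 3 / 4"
proof -
  show q: "poly q c \<noteq> 0"
    using assms(2) coprime_poly_0[OF assms(1), of c] by (auto simp: dynatomic2_def)
  have "poly (q * (2 * p + q)) c = 0"
    using assms(2,3) by (simp add: dynatomic2_eq_period_poly_plus)
  then show s: "poly (2 * p + q) c = 0" using q by simp
  have "poly (4 * dynatomic2 p q) c = 0" using assms(2) by simp
  then have "(4 * c + 3) * poly q c ^ 2 = 0"
    unfolding four_dynatomic2 using s by (simp add: mult.commute)
  then have "4 * c + 3 = 0" using q by simp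
  then show "c = - 3 / 4" by (simp add: field_simps eq_neg_iff_add_eq_0)
qed

lemma ex_root_period_poly_2_not_1:
  fixes p q :: "'a::{alg_closed_field, field_char_0} poly"
  assumes "q \<noteq> 0" "coprime p q" "2 * p + q \<noteq> 0"
  shows "\<exists>c. poly (period_poly 2 p q 2) c = 0 \<and> poly (period_poly 2 p q 1) c \<noteq> 0"
proof (rule ccontr)
  assume "\<not> ?thesis"
  then have common: "poly (period_poly 2 p q 1) c = 0" if "poly (dynatomic2 p q) c = 0" for c
    using that by (auto simp: period_poly_2_2)
  define B s c0 where "B = dynatomic2 p q" and "s = 2 * p + q" and "c0 = - 3 / (4 :: 'a)"
  have degB: "degree B = orbit_degree 2 p q"
    unfolding B_def using assms(1) by (rule degree_dynatomic2)
  then have "B \<noteq> 0" "degree B > 0" by (auto simp: orbit_degree_def)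
  have "c = c0" if "poly B c = 0" for c
    using common_root_dynatomic2_period_poly_1(3)[OF assms(2)] that common
    unfolding B_def c0_def by blast
  moreover obtain c where "poly B c = 0"
    using alg_closed_imp_poly_has_root \<open>degree B > 0\<close> by blast
  ultimately have roots: "{c. poly B c = 0} = {c0}" by auto
  then have q: "poly q c0 \<noteq> 0" and s: "poly s c0 = 0"
    using common_root_dynatomic2_period_poly_1[OF assms(2) _ common, of c0]
    unfolding B_def s_def by auto
  \<comment> \<open>\<open>c0\<close> is a simple root: the term \<open>s\<^sup>2\<close> of \<open>4 B\<close> vanishes to second order there.\<close>
  have "poly (pderiv (4 * B)) c0 = 2 * poly s c0 * poly (pderiv s) c0 + 4 * poly q c0 ^ 2
      + (4 * c0 + 3) * (2 * poly q c0 * poly (pderiv q) c0)"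
    unfolding B_def four_dynatomic2 s_def
    by (simp add: pderiv_add pderiv_mult pderiv_power_Suc power2_eq_square pderiv_pCons algebra_simps)
  then have "poly (pderiv B) c0 \<noteq> 0"
    using q s by (simp add: c0_def pderiv_mult)
  then have "order c0 (pderiv B) = 0"
    by (rule order_0I)
  moreover have "poly B c0 = 0"
    using roots by auto
  ultimately have "order c0 B = 1"
    using order_pderiv[OF \<open>B \<noteq> 0\<close>] by simp
  then have "degree B = 1"
    using degree_eq_sum_order[OF \<open>B \<noteq> 0\<close>] roots by simp
  then have "degree p = 0" "degree q = 0"
    using degB by (auto simp: orbit_degree_def)
  then have "degree s = 0"
    unfolding s_def using degree_add_le_max[of "2 * p" q] degree_mult_le[of 2 p] by simp
  then obtain a where "s = [:a:]" by (elim degree_eq_zeroE)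
  then show False
    using s assms(3) unfolding s_def by simp
qed

lemma period_poly_2_2_minus_half:
  assumes "2 * p + q = 0"
  shows "period_poly 2 p q 2 = period_poly 2 p q 1 ^ 2"
  using assms by (simp add: period_poly_2_2 dynatomic2_eq_period_poly_plus power2_eq_square)

lemma ex_period_le_half:
  assumes "(f ^^ N) x = x" "0 < m" "m < N" "(f ^^ m) x = x"
  shows "\<exists>k. 0 < k \<and> k \<le> N div 2 \<and> (f ^^ k) x = x"
proof -
  define P where "P k \<longleftrightarrow> 0 < k \<and> (f ^^ k) x = x" for k
  define k where "k = (LEAST k. P k)"
  have "P m" using assms(2,4) by (simp add: P_def)
  then have "P k" "k \<le> m"
    unfolding k_def by (rule LeastI, rule Least_le)
  then have k: "0 < k" "(f ^^ k) x = x" by (simp_all add: P_def)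
  have "(f ^^ (N mod k)) x = x"
    using funpow_mod_eq[OF k(2)] assms(1) by simp
  moreover have "\<not> P (N mod k)"
    unfolding k_def by (rule not_less_Least) (use k(1) in \<open>simp add: k_def\<close>)
  ultimately have "N mod k = 0" by (simp add: P_def)
  then have "k \<le> N div 2"
    using \<open>k \<le> m\<close> assms(3) by (intro divisor_less_eq_half_nat) auto
  then show ?thesis using k by blast
qed

lemma has_portrait_0_iff_small_periods:
  assumes "(f ^^ N) x = x" "N \<ge> 1"
  shows "has_portrait f x 0 N \<longleftrightarrow> (\<forall>k. 0 < k \<and> k \<le> N div 2 \<longrightarrow> (f ^^ k) x \<noteq> x)"
  using assms ex_period_le_half[OF assms(1)]
  by (auto simp: has_portrait_def has_exact_period_def is_periodic_def)

lemma has_portrait_fdc_if_period_poly_root: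
  fixes p q :: "'a::field poly"
  assumes "d \<ge> 2" "poly q c \<noteq> 0" "N \<ge> 1" "poly (period_poly d p q N) c = 0"
    and "\<forall>i < N div 2. poly (period_poly d p q (Suc i)) c \<noteq> 0"
  shows "has_portrait (fdc d c) (Some (poly p c / poly q c)) 0 N"
proof -
  have fixed_iff: "(fdc d c ^^ n) (Some (poly p c / poly q c)) = Some (poly p c / poly q c)
      \<longleftrightarrow> poly (period_poly d p q n) c = 0" for n
    using assms(1,2) by (intro funpow_fdc_fixed_iff) auto
  have "poly (period_poly d p q k) c \<noteq> 0" if "0 < k" "k \<le> N div 2" for k
    using assms(5)[rule_format, of "k - 1"] that by simp
  then show ?thesis
    using assms(3,4) by (subst has_portrait_0_iff_small_periods) (auto simp: fixed_iff)
qed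

lemma has_exact_period_fdc_None_iff: "has_exact_period (fdc d c) None N \<longleftrightarrow> N = 1"
proof -
  have "(fdc d c ^^ n) None = None" for n
    by (induction n) (simp_all add: fdc_def)
  then show ?thesis by (auto simp: has_exact_period_def dest: spec[of _ 1])
qed

lemma fract_eq_minus_half_iff:
  fixes p q :: "'a::{field_char_0, field_gcd} poly"
  assumes "q \<noteq> 0"
  shows "Fract p q = - 1 / 2 \<longleftrightarrow> 2 * p + q = 0"
proof -
  have two: "(2 :: 'a poly fract) = Fract 2 1"
    using of_nat_fract[of 2, where 'a = "'a poly"] by simp
  have minus_one: "(-1 :: 'a poly fract) = Fract (-1) 1"
    by (simp add: One_fract_def)
  have "(2 :: 'a poly fract) \<noteq> 0"
    unfolding two by (simp add: eq_fract Zero_fract_def)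
  then have "Fract p q = - 1 / 2 \<longleftrightarrow> 2 * Fract p q = -1"
    unfolding eq_divide_eq by (simp add: mult.commute)
  also have "\<dots> \<longleftrightarrow> Fract (2 * p) q = Fract (-1) 1"
    unfolding two minus_one by simp
  also have "\<dots> \<longleftrightarrow> 2 * p = - q"
    using assms by (simp add: eq_fract)
  also have "\<dots> \<longleftrightarrow> 2 * p + q = 0"
    by (rule eq_neg_iff_add_eq_0)
  finally show ?thesis .
qed

lemma ex_period_poly_root_of_exact_period:
  fixes p q :: "'a::{alg_closed_field, field_char_0} poly"
  assumes d: "d \<ge> 2" and "N \<ge> 1" "q \<noteq> 0" "coprime p q"
    and not_exception: "\<not> (2 * p + q = 0 \<and> N = 2 \<and> d = 2)"
  shows "\<exists>c. poly (period_poly d p q N) c = 0 \<and> (\<forall>i < N div 2. poly (period_poly d p q (Suc i)) c \<noteq> 0)"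
proof (cases "N = 1")
  case True
  have "degree (period_poly d p q 1) > 0"
    using degree_period_poly[OF d \<open>q \<noteq> 0\<close>, of p 0] by (simp add: orbit_degree_def)
  then show ?thesis
    using alg_closed_imp_poly_has_root True by auto
next
  case False
  define K where "K = N - 2"
  have N: "N = K + 2"
    using \<open>N \<ge> 1\<close> False unfolding K_def by simp
  consider "K = 0" "d = 2" | "\<not> (K = 0 \<and> d = 2)" "p = [:0, 1:] * q"
    | "\<not> (K = 0 \<and> d = 2)" "p \<noteq> [:0, 1:] * q"
    by blast
  then show ?thesis
  proof cases
    case 1
    then show ?thesis
      using ex_root_period_poly_2_not_1[OF \<open>q \<noteq> 0\<close> \<open>coprime p q\<close>] not_exception N
      by (auto simp: numeral_2_eq_2)
  next
    case 2
    note bounds = card_roots_period_poly_at_t[OF d \<open>q \<noteq> 0\<close> \<open>coprime p q\<close> 2(2)]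
    show ?thesis
      unfolding N
      by (rule ex_root_avoiding_half_indices[where E = 1 and F = "period_poly d p q", OF d 2(1) period_poly_neq_0[OF d \<open>q \<noteq> 0\<close>]])
        (use bounds in simp_all)
  next
    case 3
    show ?thesis
      unfolding N
      by (rule ex_root_avoiding_half_indices[where F = "period_poly d p q", OF d 3(1) period_poly_neq_0[OF d \<open>q \<noteq> 0\<close>]
            card_roots_period_poly_le[OF d \<open>q \<noteq> 0\<close>]
            card_roots_period_poly_gt[OF d \<open>q \<noteq> 0\<close> \<open>coprime p q\<close> 3(2)]])
  qed
qed

lemma not_has_exact_period_2_if_minus_half:
  fixes p q :: "'a::field poly"
  assumes "2 * p + q = 0" "poly q c \<noteq> 0"
  shows "\<not> has_exact_period (fdc 2 c) (Some (poly p c / poly q c)) 2"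
proof
  have fixed_iff: "(fdc 2 c ^^ n) (Some (poly p c / poly q c)) = Some (poly p c / poly q c)
      \<longleftrightarrow> poly (period_poly 2 p q n) c = 0" for n
    using assms(2) by (intro funpow_fdc_fixed_iff) auto
  assume "has_exact_period (fdc 2 c) (Some (poly p c / poly q c)) 2"
  then have "poly (period_poly 2 p q 2) c = 0" "poly (period_poly 2 p q 1) c \<noteq> 0"
    unfolding has_exact_period_def fixed_iff by (auto dest: spec[of _ 1])
  then show False
    using period_poly_2_2_minus_half[OF assms(1)] by simp
qed

lemma specialize_eq:
  assumes "quot_of_fract \<alpha> = (p, q)"
  shows "specialize \<alpha> c = (if poly q c = 0 then None else Some (poly p c / poly q c))"
  using assms by (simp add: specialize_def)

lemma not_realizes_portrait_minus_half:
  "\<not> realizes_portrait (- 1 / 2 :: 'a::{field_char_0, field_gcd} poly fract) 2 0 2"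
proof
  obtain p q where pq: "quot_of_fract (- 1 / 2 :: 'a poly fract) = (p, q)"
    by (cases "quot_of_fract (- 1 / 2 :: 'a poly fract)")
  then have "q \<noteq> 0" "Fract p q = - 1 / 2"
    using snd_quot_of_fract_nonzero[of "- 1 / 2 :: 'a poly fract"]
      Fract_quot_of_fract[of "- 1 / 2 :: 'a poly fract"] by simp_all
  then have "2 * p + q = 0"
    using fract_eq_minus_half_iff by blast
  moreover assume "realizes_portrait (- 1 / 2 :: 'a poly fract) 2 0 2"
  then obtain c where "has_exact_period (fdc 2 c) (specialize (- 1 / 2 :: 'a poly fract) c) 2"
    by (auto simp: realizes_portrait_def has_portrait_def)
  then have "has_exact_period (fdc 2 c) (if poly q c = 0 then None else Some (poly p c / poly q c)) 2"
    by (simp only: specialize_eq[OF pq])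
  ultimately show False
    by (cases "poly q c = 0")
      (simp_all add: has_exact_period_fdc_None_iff not_has_exact_period_2_if_minus_half)
qed

lemma realizes_portrait_0_if_period_poly_root:
  fixes \<alpha> :: "'a::{field_char_0, field_gcd} poly fract"
  assumes pq: "quot_of_fract \<alpha> = (p, q)" and "d \<ge> 2" "N \<ge> 1"
    and "poly (period_poly d p q N) c = 0"
    and "\<forall>i < N div 2. poly (period_poly d p q (Suc i)) c \<noteq> 0"
  shows "realizes_portrait \<alpha> d 0 N"
proof -
  have "poly q c \<noteq> 0"
    using poly_period_poly_at_root_neq_0[of p q c d N] coprime_quot_of_fract[of \<alpha>] assms by auto
  then have "has_portrait (fdc d c) (specialize \<alpha> c) 0 N"
    using has_portrait_fdc_if_period_poly_root[OF assms(2) _ assms(3-5)] by (simp add: specialize_eq[OF pq])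
  then show ?thesis
    by (auto simp: realizes_portrait_def)
qed

theorem proposition3p2:
  fixes \<alpha> :: "'a::{alg_closed_field, field_char_0, field_gcd} poly fract"
    and N d :: nat
  assumes "N \<ge> 1" and "d \<ge> 2"
  shows "realizes_portrait \<alpha> d 0 N \<longleftrightarrow> \<not> (\<alpha> = - 1 / 2 \<and> N = 2 \<and> d = 2)"
proof
  show "\<not> (\<alpha> = - 1 / 2 \<and> N = 2 \<and> d = 2)" if "realizes_portrait \<alpha> d 0 N"
    using that not_realizes_portrait_minus_half by auto
next
  obtain p q where pq: "quot_of_fract \<alpha> = (p, q)"
    by (cases "quot_of_fract \<alpha>")
  have "q \<noteq> 0" "coprime p q" and \<alpha>: "\<alpha> = Fract p q"
    using snd_quot_of_fract_nonzero[of \<alpha>] coprime_quot_of_fract[of \<alpha>] Fract_quot_of_fract[of \<alpha>]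
    by (simp_all add: pq)
  then have "\<alpha> = - 1 / 2 \<longleftrightarrow> 2 * p + q = 0"
    unfolding \<alpha> by (intro fract_eq_minus_half_iff)
  moreover assume "\<not> (\<alpha> = - 1 / 2 \<and> N = 2 \<and> d = 2)"
  ultimately obtain c where "poly (period_poly d p q N) c = 0"
      "\<forall>i < N div 2. poly (period_poly d p q (Suc i)) c \<noteq> 0"
    using ex_period_poly_root_of_exact_period[OF assms(2,1) \<open>q \<noteq> 0\<close> \<open>coprime p q\<close>] by blast
  then show "realizes_portrait \<alpha> d 0 N"
    by (rule realizes_portrait_0_if_period_poly_root[OF pq assms(2,1)])
qed

end
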